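(* For every $n\ge2$: no $\omega\in\widetilde{S}_n$ avoids $123$; exactly one $\omega\in\widetilde{S}_n$ (the identity) avoids $132$, and exactly one (the identity) avoids $213$; and the number of $\omega\in\widetilde{S}_n$ avoiding $231$ equals the number avoiding $312$, both being $\binom{2n-1}{n}$. Equivalently, with $f^p(t)=\sum_{n\ge2}\#\{\omega\in\widetilde{S}_n:\omega\text{ avoids }p\}\,t^n$, we have $f^{123}(t)=0$, $f^{132}(t)=f^{213}(t)=\sum_{n\ge2}t^n$, and $f^{231}(t)=f^{312}(t)=\sum_{n\ge2}\binom{2n-1}{n}t^n$.
   Context: For $n\ge 2$, the affine symmetric group $\widetilde{S}_n$ is the set of bijections $\omega:\mathbb{Z}\to\mathbb{Z}$ such that $\omega(i+n)=\omega(i)+n$ for all $i\in\mathbb{Z}$ and $\sum_{i=1}^n\omega(i)=\binom{n+1}{2}$; write $\omega_i=\omega(i)$. For $p\in S_k$, $\omega$ contains $p$ if there exist integers $i_1<\cdots<i_k$ such that $\omega_{i_1}\cdots\omega_{i_k}$ has the same relative order as $p_1\cdots p_k$; otherwise $\omega$ avoids $p$. *)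

theory Defs
  imports Main
begin

definition affine_perm :: "nat \<Rightarrow> (int \<Rightarrow> int) \<Rightarrow> bool" where
  "affine_perm n w \<longleftrightarrow> bij w \<and> (\<forall>i. w (i + int n) = w i + int n)
     \<and> (\<Sum>i\<in>{1..int n}. w i) = int ((n + 1) choose 2)"

definition affine_sym_group :: "nat \<Rightarrow> (int \<Rightarrow> int) set" where
  "affine_sym_group n = {w. affine_perm n w}"

definition contains_pattern :: "(int \<Rightarrow> int) \<Rightarrow> nat list \<Rightarrow> bool" where
  "contains_pattern w p \<longleftrightarrow>
     (\<exists>idx :: nat \<Rightarrow> int. (\<forall>a b. a < b \<and> b < length p \<longrightarrow> idx a < idx b) \<and>
        (\<forall>a b. a < length p \<and> b < length p \<longrightarrow> (w (idx a) < w (idx b) \<longleftrightarrow> p ! a < p ! b)))"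

definition avoids_pattern :: "(int \<Rightarrow> int) \<Rightarrow> nat list \<Rightarrow> bool" where
  "avoids_pattern w p \<longleftrightarrow> \<not> contains_pattern w p"

definition avoiders :: "nat \<Rightarrow> nat list \<Rightarrow> (int \<Rightarrow> int) set" where
  "avoiders n p = {w \<in> affine_sym_group n. avoids_pattern w p}"

end

theory Submission
  imports Defs
begin

text \<open>
  The patterns 123, 132 and 213 are easy: quasi-periodicity \<open>w (i + n) = w i + n\<close>
  produces 123 in every affine permutation, and turns any descent into a 132 and a 213, so
  only increasing affine permutations, i.e. the identity, avoid 132 or 213.
  Reverse-complement \<open>i \<mapsto> n + 1 - w (n + 1 - i)\<close> exchanges 231 and 312.

  The heart of the file is the count for 231.  For a 231-avoider \<open>w\<close> the positions right of
  \<open>i\<close> carrying smaller values form an interval \<open>{i<..arc w i}\<close>; the arcs \<open>[i, arc w i]\<close>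
  form an n-periodic family of pairwise non-crossing arcs (a "nesting function"), and every
  such family arises from exactly one 231-avoider.  A nesting function in turn is determined
  by how many arcs end at each of the positions \<open>1, \<dots>, n\<close>; these numbers form an arbitrary
  weak composition of \<open>n\<close> into \<open>n\<close> parts, of which there are \<open>(2n-1) choose n\<close>.  The
  reconstruction goes through the depth function (number of arcs over a gap), whose
  "first return below the start level" recovers the arcs.
\<close>

section \<open>Periodic functions on the integers\<close>

lemma periodic_multiple:
  fixes g :: "int \<Rightarrow> 'a" and N :: int
  assumes per: "\<And>i. g (i + N) = g i"
  shows "g (i + k * N) = g i"
proof (induction k rule: int_induct[where k=0])
  case base then show ?case by simp
next
  case (step1 k)
  have "g (i + (k + 1) * N) = g ((i + k * N) + N)" by (simp add: algebra_simps)
  then show ?case using per step1 by simp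
next
  case (step2 k)
  have "g (i + k * N) = g ((i + (k - 1) * N) + N)" by (simp add: algebra_simps)
  then show ?case using per step2 by simp
qed

lemma quasi_periodic_multiple:
  fixes f :: "int \<Rightarrow> int" and N :: int
  assumes per: "\<And>i. f (i + N) = f i + N"
  shows "f (i + k * N) = f i + k * N"
proof -
  have "f (i + N) - (i + N) = f i - i" for i using per[of i] by simp
  then have "f (i + k * N) - (i + k * N) = f i - i"
    using periodic_multiple[of "\<lambda>i. f i - i" N] by blast
  then show ?thesis by simp
qed

lemma periodic_window:
  fixes g :: "int \<Rightarrow> 'a" and N :: int
  assumes "N > 0" and per: "\<And>i. g (i + N) = g i"
  obtains r where "r \<in> {1..N}" "g p = g r"
proof
  define r where "r = (p - 1) mod N + 1"
  show "r \<in> {1..N}" unfolding r_def using \<open>N > 0\<close> by (simp add: add1_zle_eq)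
  have "p = r + ((p - 1) div N) * N" unfolding r_def by (simp add: algebra_simps)
  then show "g p = g r" using periodic_multiple[of g N, OF per] by metis
qed

lemma card_translate:
  fixes A B :: "int set"
  assumes "\<And>k. k + c \<in> B \<longleftrightarrow> k \<in> A"
  shows "card B = card A"
proof -
  have "B = (\<lambda>k. k + c) ` A"
  proof (intro equalityI subsetI)
    fix x assume "x \<in> B"
    then have "x - c \<in> A" using assms[of "x - c"] by simp
    then show "x \<in> (\<lambda>k. k + c) ` A" by (auto intro: image_eqI[of _ _ "x - c"])
  qed (use assms in auto)
  then show ?thesis by (simp add: card_image)
qed

context
  fixes f :: "int \<Rightarrow> int" and N :: int
  assumes N_pos: "N > 0" and f_periodic: "\<And>i. f (i + N) = f i + N" and f_inj: "inj f"
begin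

lemma residues_bij: "bij_betw (\<lambda>i. f i mod N) {1..N} {0..<N}"
proof -
  have "inj_on (\<lambda>i. f i mod N) {1..N}"
  proof (rule inj_onI)
    fix i j assume ij: "i \<in> {1..N}" "j \<in> {1..N}" "f i mod N = f j mod N"
    then obtain t where "f i - f j = t * N" by (metis dvd_def mod_eq_dvd_iff mult.commute)
    then have "f i = f (j + t * N)" using quasi_periodic_multiple[of f N, OF f_periodic] by simp
    then have "i = j + t * N" using f_inj by (simp add: inj_eq)
    moreover have "t = 0"
    proof (rule ccontr)
      assume "t \<noteq> 0"
      then have "N \<le> \<bar>t * N\<bar>" using N_pos by (simp add: abs_mult)
      then show False using \<open>i = j + t * N\<close> ij by auto
    qed
    ultimately show "i = j" by simp
  qed
  moreover have "(\<lambda>i. f i mod N) ` {1..N} \<subseteq> {0..<N}" using N_pos by auto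
  ultimately show ?thesis
    unfolding bij_betw_def by (simp add: card_image card_subset_eq)
qed

lemma quasi_periodic_surj: "surj f"
proof -
  have "v \<in> range f" for v
  proof -
    have "v mod N \<in> (\<lambda>i. f i mod N) ` {1..N}"
      using residues_bij N_pos unfolding bij_betw_def by simp
    then obtain i where "f i mod N = v mod N" by (auto simp: image_iff)
    then obtain t where "v - f i = t * N" by (metis dvd_def mod_eq_dvd_iff mult.commute)
    then have "v = f (i + t * N)" using quasi_periodic_multiple[of f N, OF f_periodic] by simp
    then show ?thesis by blast
  qed
  then show ?thesis by blast
qed

lemma window_sum_mod: "(\<Sum>i\<in>{1..N}. f i) mod N = (\<Sum>r\<in>{0..<N}. r) mod N"
proof -
  have "(\<Sum>i\<in>{1..N}. f i) mod N = (\<Sum>i\<in>{1..N}. f i mod N) mod N" by (rule mod_sum_eq[symmetric])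
  also have "(\<Sum>i\<in>{1..N}. f i mod N) = (\<Sum>r\<in>{0..<N}. r)"
    using sum.reindex_bij_betw[OF residues_bij, of "\<lambda>r. r"] by simp
  finally show ?thesis .
qed

end

section \<open>Affine permutations\<close>

lemma gauss_int: "2 * (\<Sum>i\<in>{1..int n}. i) = int n * (int n + 1)"
proof (induction n)
  case (Suc n)
  have "{1..int (Suc n)} = insert (1 + int n) {1..int n}"
    using atLeastAtMostPlus1_int_conv[of 1 "int n"] by simp
  then show ?case using Suc by (simp add: algebra_simps)
qed simp

lemma affine_perm_iff: "affine_perm n w \<longleftrightarrow> bij w \<and> (\<forall>i. w (i + int n) = w i + int n)
     \<and> (\<Sum>i\<in>{1..int n}. w i) = (\<Sum>i\<in>{1..int n}. i)"
proof -
  have "2 * ((n + 1) choose 2) = (n + 1) * n" by (simp add: choose_two)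
  then have "2 * int ((n + 1) choose 2) = int n * (int n + 1)" by (simp flip: of_nat_mult add: algebra_simps)
  then have "(\<Sum>i\<in>{1..int n}. i) = int ((n + 1) choose 2)" using gauss_int[of n] by simp
  then show ?thesis unfolding affine_perm_def by simp
qed

lemma id_affine: "affine_perm n id"
  unfolding affine_perm_iff by simp

lemma affine_normalise:
  assumes "n > 0" and periodic: "\<And>i. w (i + int n) = w i + int n" and "inj w"
  obtains s where "affine_perm n (\<lambda>i. w i - s)"
proof -
  have N_pos: "int n > 0" using assms(1) by simp
  have "(\<Sum>i\<in>{1..int n}. id i) mod int n = (\<Sum>r\<in>{0..<int n}. r) mod int n"
    by (rule window_sum_mod[OF N_pos]) simp_all
  then have "(\<Sum>i\<in>{1..int n}. w i) mod int n = (\<Sum>i\<in>{1..int n}. i) mod int n"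
    using window_sum_mod[OF N_pos periodic \<open>inj w\<close>] by simp
  then obtain s where s: "(\<Sum>i\<in>{1..int n}. w i) - (\<Sum>i\<in>{1..int n}. i) = int n * s"
    unfolding mod_eq_dvd_iff dvd_def by blast
  have "bij (\<lambda>i. w i - s)"
  proof -
    have "surj w" by (rule quasi_periodic_surj[OF N_pos periodic \<open>inj w\<close>])
    then have "v \<in> range (\<lambda>i. w i - s)" for v
    proof -
      obtain x where "v + s = w x" using \<open>surj w\<close> by (metis surjD)
      then show ?thesis by (intro range_eqI[of _ _ x]) simp
    qed
    moreover have "inj (\<lambda>i. w i - s)" using \<open>inj w\<close> by (simp add: inj_def)
    ultimately show ?thesis by (auto simp: bij_def)
  qed
  moreover have "(\<Sum>i\<in>{1..int n}. w i - s) = (\<Sum>i\<in>{1..int n}. i)"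
    using s by (simp add: sum_subtractf)
  ultimately have "affine_perm n (\<lambda>i. w i - s)" unfolding affine_perm_iff using periodic by simp
  then show thesis by (rule that)
qed

lemma increasing_bij_shift:
  fixes f :: "int \<Rightarrow> int"
  assumes "surj f" and mono: "\<And>a b. a < b \<Longrightarrow> f a < f b"
  shows "f x = f 0 + x"
proof -
  have succ: "f (a + 1) = f a + 1" for a
  proof (rule ccontr)
    assume "f (a + 1) \<noteq> f a + 1"
    then have gap: "f a + 1 < f (a + 1)" using mono[of a "a + 1"] by simp
    obtain y where y: "f y = f a + 1" using assms(1) by (metis surjD)
    have "a < y" using mono[of y a] y by (cases y a rule: linorder_cases) auto
    moreover have "y < a + 1" using mono[of "a + 1" y] y gap by (cases y "a + 1" rule: linorder_cases) auto
    ultimately show False by simp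
  qed
  show ?thesis
  proof (induction x rule: int_induct[where k=0])
    case (step1 i) then show ?case using succ[of i] by simp
  next
    case (step2 i) then show ?case using succ[of "i - 1"] by simp
  qed simp
qed

lemma order_iso_shift:
  fixes w1 w2 :: "int \<Rightarrow> int"
  assumes "bij w1" "bij w2" and same_order: "\<And>i j. w1 i < w1 j \<longleftrightarrow> w2 i < w2 j"
  obtains c where "\<And>i. w2 i = w1 i + c"
proof -
  define f where "f = w2 \<circ> inv w1"
  have w1_inv: "w1 (inv w1 a) = a" for a using assms(1) by (simp add: bij_is_surj surj_f_inv_f)
  have "surj f" unfolding f_def using assms(1,2) bij_comp bij_imp_bij_inv bij_is_surj by blast
  moreover have "f a < f b" if "a < b" for a b
    unfolding f_def using same_order[of "inv w1 a" "inv w1 b"] w1_inv that by simp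
  ultimately have shift: "f x = f 0 + x" for x by (rule increasing_bij_shift)
  have "w2 i = w1 i + f 0" for i
  proof -
    have "f (w1 i) = w2 i" unfolding f_def using assms(1) by (simp add: bij_is_inj)
    then show ?thesis using shift[of "w1 i"] by simp
  qed
  then show thesis by (rule that)
qed

text \<open>Hence an affine permutation is determined by the relative order of its values: the
  constant is killed by the normalisation of the window sum.\<close>

lemma affine_eq_of_order:
  assumes "n > 0" "affine_perm n w1" "affine_perm n w2"
    and same_order: "\<And>i j. w1 i < w1 j \<longleftrightarrow> w2 i < w2 j"
  shows "w1 = w2"
proof -
  obtain c where c: "\<And>i. w2 i = w1 i + c"
    using order_iso_shift[of w1 w2] assms unfolding affine_perm_iff by blast
  have "(\<Sum>i\<in>{1..int n}. w2 i) = (\<Sum>i\<in>{1..int n}. w1 i) + int n * c"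
    by (simp add: c sum.distrib)
  then have "int n * c = 0" using assms(2,3) unfolding affine_perm_iff by simp
  then show ?thesis using assms(1) c by auto
qed

section \<open>Patterns of length three\<close>

lemma contains_pattern3:
  "contains_pattern w [p, q, r] \<longleftrightarrow> (\<exists>i j k. i < j \<and> j < k \<and>
      (w i < w j \<longleftrightarrow> p < q) \<and> (w j < w i \<longleftrightarrow> q < p) \<and>
      (w i < w k \<longleftrightarrow> p < r) \<and> (w k < w i \<longleftrightarrow> r < p) \<and>
      (w j < w k \<longleftrightarrow> q < r) \<and> (w k < w j \<longleftrightarrow> r < q))"
    (is "?contains \<longleftrightarrow> (\<exists>i j k. ?pattern i j k)")
proof
  assume ?contains
  then obtain idx :: "nat \<Rightarrow> int" where
    increasing: "\<forall>a b. a < b \<and> b < length [p, q, r] \<longrightarrow> idx a < idx b" and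
    same_order: "\<forall>a b. a < length [p, q, r] \<and> b < length [p, q, r] \<longrightarrow>
      (w (idx a) < w (idx b) \<longleftrightarrow> [p, q, r] ! a < [p, q, r] ! b)"
    unfolding contains_pattern_def by blast
  have "?pattern (idx 0) (idx 1) (idx 2)"
    using increasing[rule_format, of 0 1] increasing[rule_format, of 1 2]
      same_order[rule_format, of 0 1] same_order[rule_format, of 1 0] same_order[rule_format, of 0 2]
      same_order[rule_format, of 2 0] same_order[rule_format, of 1 2] same_order[rule_format, of 2 1]
    by simp
  then show "\<exists>i j k. ?pattern i j k" by blast
next
  assume "\<exists>i j k. ?pattern i j k"
  then obtain i j k where ijk: "?pattern i j k" by blast
  define idx where "idx = (\<lambda>a::nat. if a = 0 then i else if a = 1 then j else k)"
  have three: "a < 3 \<Longrightarrow> a = 0 \<or> a = 1 \<or> a = 2" for a :: nat by auto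
  have "\<forall>a b. a < b \<and> b < length [p, q, r] \<longrightarrow> idx a < idx b"
  proof (intro allI impI)
    fix a b assume "a < b \<and> b < length [p, q, r]"
    then show "idx a < idx b" using three[of a] three[of b] ijk unfolding idx_def by auto
  qed
  moreover have "\<forall>a b. a < length [p, q, r] \<and> b < length [p, q, r] \<longrightarrow>
      (w (idx a) < w (idx b) \<longleftrightarrow> [p, q, r] ! a < [p, q, r] ! b)"
  proof (intro allI impI)
    fix a b assume "a < length [p, q, r] \<and> b < length [p, q, r]"
    then show "w (idx a) < w (idx b) \<longleftrightarrow> [p, q, r] ! a < [p, q, r] ! b"
      using three[of a] three[of b] ijk unfolding idx_def by auto
  qed
  ultimately show ?contains unfolding contains_pattern_def by blast
qed

lemma contains_123: "contains_pattern w [1,2,3] \<longleftrightarrow> (\<exists>i j k. i < j \<and> j < k \<and> w i < w j \<and> w j < w k)"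
  unfolding contains_pattern3 by (auto; meson less_trans not_less_iff_gr_or_eq)

lemma contains_132: "contains_pattern w [1,3,2] \<longleftrightarrow> (\<exists>i j k. i < j \<and> j < k \<and> w i < w k \<and> w k < w j)"
  unfolding contains_pattern3 by (auto; meson less_trans not_less_iff_gr_or_eq)

lemma contains_213: "contains_pattern w [2,1,3] \<longleftrightarrow> (\<exists>i j k. i < j \<and> j < k \<and> w j < w i \<and> w i < w k)"
  unfolding contains_pattern3 by (auto; meson less_trans not_less_iff_gr_or_eq)

lemma contains_231: "contains_pattern w [2,3,1] \<longleftrightarrow> (\<exists>i j k. i < j \<and> j < k \<and> w k < w i \<and> w i < w j)"
  unfolding contains_pattern3 by (auto; meson less_trans not_less_iff_gr_or_eq)

lemma contains_312: "contains_pattern w [3,1,2] \<longleftrightarrow> (\<exists>i j k. i < j \<and> j < k \<and> w j < w k \<and> w k < w i)"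
  unfolding contains_pattern3 by (auto; meson less_trans not_less_iff_gr_or_eq)

lemma avoiders_iff: "w \<in> avoiders n p \<longleftrightarrow> affine_perm n w \<and> \<not> contains_pattern w p"
  unfolding avoiders_def affine_sym_group_def avoids_pattern_def by simp

text \<open>The positions \<open>0 < n < 2n\<close> always form an occurrence of 123.\<close>

lemma avoiders_123_empty:
  assumes "n > 0"
  shows "avoiders n [1,2,3] = {}"
proof -
  have "contains_pattern w [1,2,3]" if "affine_perm n w" for w
  proof -
    have "w (0 + int n) = w 0 + int n" "w (int n + int n) = w (int n) + int n"
      using that unfolding affine_perm_def by blast+
    then show ?thesis unfolding contains_123 using assms
      by (intro exI[of _ 0] exI[of _ "int n"] exI[of _ "int n + int n"]) simp
  qed
  then show ?thesis by (auto simp: avoiders_iff)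
qed

text \<open>If every descent of an affine permutation yields the pattern \<open>p\<close>, then only the identity
  can avoid \<open>p\<close>, since an affine permutation without descents is the identity.\<close>

lemma avoiders_eq_id:
  assumes "n > 0" and "\<not> contains_pattern id p"
    and descent: "\<And>w i j. affine_perm n w \<Longrightarrow> i < j \<Longrightarrow> w j < w i \<Longrightarrow> contains_pattern w p"
  shows "avoiders n p = {id}"
proof (intro equalityI subsetI)
  fix w assume "w \<in> avoiders n p"
  then have w: "affine_perm n w" and avoids: "\<not> contains_pattern w p" by (auto simp: avoiders_iff)
  have "inj w" using w unfolding affine_perm_def by (simp add: bij_is_inj)
  then have increasing: "w i < w j" if "i < j" for i j
    using descent[OF w that] avoids that by (metis inj_eq less_irrefl not_less_iff_gr_or_eq)
  have "id = w"
  proof (rule affine_eq_of_order[OF assms(1) id_affine w])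
    show "id i < id j \<longleftrightarrow> w i < w j" for i j
      using increasing[of i j] increasing[of j i] by (cases i j rule: linorder_cases) auto
  qed
  then show "w \<in> {id}" by simp
qed (use assms(2) id_affine in \<open>simp add: avoiders_iff\<close>)

text \<open>A descent \<open>w j < w i\<close> is completed to 132 by a far-left translate of \<open>i\<close>, and to 213 by a
  far-right translate of \<open>j\<close>.\<close>

lemma descent_contains_132:
  assumes "n > 0" "affine_perm n w" "i < j" "w j < w i"
  shows "contains_pattern w [1,3,2]"
proof -
  define m where "m = w i - w j + 1"
  have m: "m \<le> m * int n" "0 < m * int n" "w i < w j + m" using assms unfolding m_def by simp_all
  have "w (i + (- m) * int n) = w i + (- m) * int n"
    by (rule quasi_periodic_multiple) (use assms(2) in \<open>simp add: affine_perm_def\<close>)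
  then have "w (i - m * int n) < w j" using m by simp
  then show ?thesis unfolding contains_132 using assms m
    by (intro exI[of _ "i - m * int n"] exI[of _ i] exI[of _ j]) simp
qed

lemma descent_contains_213:
  assumes "n > 0" "affine_perm n w" "i < j" "w j < w i"
  shows "contains_pattern w [2,1,3]"
proof -
  define m where "m = w i - w j + 1"
  have m: "m \<le> m * int n" "0 < m * int n" "w i < w j + m" using assms unfolding m_def by simp_all
  have "w (j + m * int n) = w j + m * int n"
    by (rule quasi_periodic_multiple) (use assms(2) in \<open>simp add: affine_perm_def\<close>)
  then have "w i < w (j + m * int n)" using m by simp
  then show ?thesis unfolding contains_213 using assms m
    by (intro exI[of _ i] exI[of _ j] exI[of _ "j + m * int n"]) simp
qed

lemma avoiders_132:
  assumes "n > 0"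
  shows "avoiders n [1,3,2] = {id}"
proof (rule avoiders_eq_id[OF assms])
  show "\<not> contains_pattern id [1,3,2]" unfolding contains_132 by auto
  show "contains_pattern w [1,3,2]" if "affine_perm n w" "i < j" "w j < w i" for w i j
    using descent_contains_132[OF assms that] .
qed

lemma avoiders_213:
  assumes "n > 0"
  shows "avoiders n [2,1,3] = {id}"
proof (rule avoiders_eq_id[OF assms])
  show "\<not> contains_pattern id [2,1,3]" unfolding contains_213 by auto
  show "contains_pattern w [2,1,3]" if "affine_perm n w" "i < j" "w j < w i" for w i j
    using descent_contains_213[OF assms that] .
qed

section \<open>Nesting functions\<close>

text \<open>A nesting function of period \<open>N\<close> describes an N-periodic family of arcs \<open>[i, h i]\<close>
  of length less than \<open>N\<close>, one starting at every integer, no two of which cross.\<close>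

definition nesting :: "int \<Rightarrow> (int \<Rightarrow> int) \<Rightarrow> bool" where
  "nesting N h \<longleftrightarrow> (\<forall>i. i \<le> h i \<and> h i < i + N) \<and> (\<forall>i. h (i + N) = h i + N)
     \<and> (\<forall>i j. i < j \<and> j \<le> h i \<longrightarrow> h j \<le> h i)"

text \<open>The depth at \<open>q\<close> is the number of arcs passing over the gap between \<open>q\<close> and \<open>q + 1\<close>.\<close>

definition depth :: "(int \<Rightarrow> int) \<Rightarrow> int \<Rightarrow> int" where
  "depth h q = int (card {k. k \<le> q \<and> q < h k})"

context
  fixes h :: "int \<Rightarrow> int" and N :: int
  assumes nest: "nesting N h"
begin

lemma nesting_le: "i \<le> h i" and nesting_lt: "h i < i + N"
  and nesting_periodic: "h (i + N) = h i + N"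
  and nesting_nested: "i < j \<Longrightarrow> j \<le> h i \<Longrightarrow> h j \<le> h i"
  using nest unfolding nesting_def by blast+

lemma finite_crossing: "finite {k. k \<le> q \<and> q < h k}"
proof (rule finite_subset)
  show "{k. k \<le> q \<and> q < h k} \<subseteq> {q - N<..q}"
  proof
    fix k assume "k \<in> {k. k \<le> q \<and> q < h k}"
    then show "k \<in> {q - N<..q}" using nesting_lt[of k] by simp
  qed
qed simp

lemma finite_ends: "finite {i. h i = p}"
proof (rule finite_subset)
  show "{i. h i = p} \<subseteq> {p - N<..p}"
  proof
    fix k assume "k \<in> {i. h i = p}"
    then show "k \<in> {p - N<..p}" using nesting_lt[of k] nesting_le[of k] by simp
  qed
qed simp

lemma ends_periodic: "card {i. h i = p + N} = card {i. h i = p}"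
  by (rule card_translate[where c=N]) (simp add: nesting_periodic)

lemma depth_periodic: "depth h (q + N) = depth h q"
  unfolding depth_def by (subst card_translate[where c=N]) (auto simp: nesting_periodic)

text \<open>Moving one gap to the left, one new arc starts and the arcs ending at \<open>p\<close> disappear.\<close>

lemma depth_step: "depth h p + int (card {i. h i = p}) = depth h (p - 1) + 1"
proof -
  have eq: "{k. k \<le> p \<and> p < h k} \<union> {i. h i = p} = insert p {k. k \<le> p - 1 \<and> p - 1 < h k}"
    using nesting_le by (auto; smt (verit))
  have "card ({k. k \<le> p \<and> p < h k} \<union> {i. h i = p})
      = card {k. k \<le> p \<and> p < h k} + card {i. h i = p}"
    by (rule card_Un_disjoint) (auto simp: finite_crossing finite_ends)
  moreover have "card (insert p {k. k \<le> p - 1 \<and> p - 1 < h k})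
      = card {k. k \<le> p - 1 \<and> p - 1 < h k} + 1"
    using finite_crossing[of "p - 1"] by simp
  ultimately show ?thesis using eq unfolding depth_def by simp
qed

end

text \<open>Applied to
  the depth function it recovers the arcs; applied to a lattice path it creates them.\<close>

definition first_drop :: "(int \<Rightarrow> int) \<Rightarrow> int \<Rightarrow> int" where
  "first_drop F i = i + int (LEAST d. F (i + int d) \<le> F (i - 1))"

lemma first_drop_eqI:
  assumes "i \<le> p" "F p \<le> F (i - 1)" "\<And>q. i \<le> q \<Longrightarrow> q < p \<Longrightarrow> F (i - 1) < F q"
  shows "first_drop F i = p"
proof -
  have "(LEAST d. F (i + int d) \<le> F (i - 1)) = nat (p - i)"
  proof (rule Least_equality)
    show "F (i + int (nat (p - i))) \<le> F (i - 1)" using assms by simp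
    fix d assume "F (i + int d) \<le> F (i - 1)"
    then show "nat (p - i) \<le> d" using assms(3)[of "i + int d"] by linarith
  qed
  then show ?thesis unfolding first_drop_def using assms(1) by simp
qed

lemma first_drop_add_const: "first_drop (\<lambda>q. F q + c) = first_drop F"
  by (simp add: first_drop_def fun_eq_iff)

context
  fixes F :: "int \<Rightarrow> int" and N :: int
  assumes N_pos: "N > 0" and F_periodic: "\<And>q. F (q + N) = F q"
begin

text \<open>By periodicity the level \<open>F (i - 1)\<close> is reached again within one period.\<close>

lemma first_drop_bounded: "F (i + int (nat (N - 1))) \<le> F (i - 1)"
proof -
  have "i + int (nat (N - 1)) = (i - 1) + N" using N_pos by simp
  then have "F (i + int (nat (N - 1))) = F ((i - 1) + N)" by (rule arg_cong)
  then show ?thesis using F_periodic[of "i - 1"] by simp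
qed

lemma first_drop_drops: "F (first_drop F i) \<le> F (i - 1)"
  unfolding first_drop_def by (rule LeastI[where P="\<lambda>d. F (i + int d) \<le> F (i - 1)"]) (rule first_drop_bounded)

lemma first_drop_ge: "i \<le> first_drop F i"
  unfolding first_drop_def by simp

lemma first_drop_lt: "first_drop F i < i + N"
proof -
  have "(LEAST d. F (i + int d) \<le> F (i - 1)) \<le> nat (N - 1)"
    by (rule Least_le) (rule first_drop_bounded)
  then show ?thesis unfolding first_drop_def using N_pos by linarith
qed

lemma first_drop_before: "i \<le> p \<Longrightarrow> p < first_drop F i \<Longrightarrow> F (i - 1) < F p"
proof -
  assume "i \<le> p" "p < first_drop F i"
  then have "nat (p - i) < (LEAST d. F (i + int d) \<le> F (i - 1))" unfolding first_drop_def by linarith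
  then have "\<not> F (i + int (nat (p - i))) \<le> F (i - 1)" by (rule not_less_Least)
  then show "F (i - 1) < F p" using \<open>i \<le> p\<close> by simp
qed

lemma nesting_first_drop: "nesting N (first_drop F)"
proof -
  have F_before_shift: "F (i + N - 1) = F (i - 1)" for i
    using F_periodic[of "i - 1"] by (simp add: algebra_simps)
  have periodic: "first_drop F (i + N) = first_drop F i + N" for i
  proof (rule first_drop_eqI)
    show "i + N \<le> first_drop F i + N" using first_drop_ge[of i] by simp
    show "F (first_drop F i + N) \<le> F (i + N - 1)"
      using first_drop_drops[of i] F_periodic F_before_shift by simp
    fix q assume "i + N \<le> q" "q < first_drop F i + N"
    then have "F (i - 1) < F (q - N)" using first_drop_before[of i "q - N"] by simp
    then show "F (i + N - 1) < F q" using F_periodic[of "q - N"] F_before_shift by simp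
  qed
  have nested: "first_drop F j \<le> first_drop F i" if "i < j" "j \<le> first_drop F i" for i j
  proof (rule ccontr)
    assume "\<not> first_drop F j \<le> first_drop F i"
    then have "F (j - 1) < F (first_drop F i)" using first_drop_before[of j "first_drop F i"] that by simp
    moreover have "F (i - 1) < F (j - 1)" using first_drop_before[of i "j - 1"] that by simp
    ultimately show False using first_drop_drops[of i] by simp
  qed
  show ?thesis unfolding nesting_def using first_drop_ge first_drop_lt periodic nested by blast
qed

lemma first_drop_fibre_mono:
  assumes "first_drop F i = p" "first_drop F i' = p" "i < i'"
  shows "F (i - 1) < F (i' - 1)"
  using first_drop_before[of i "i' - 1"]
    first_drop_ge[of i'] assms by simp

lemma first_drop_fibre_range:
  assumes "first_drop F i = p"
  shows "F (i - 1) \<in> {F p .. F (p - 1)}"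
proof -
  have "F p \<le> F (i - 1)" using first_drop_drops[of i] assms by simp
  moreover have "F (i - 1) \<le> F (p - 1)"
  proof (cases "i = p")
    case False
    then have "i < p" using first_drop_ge[of i] assms by simp
    then show ?thesis using first_drop_before[of i "p - 1"] assms by simp
  qed simp
  ultimately show ?thesis by simp
qed

text \<open>If \<open>F\<close> rises by at most one per step, every intermediate level is the starting level of
  some arc ending at \<open>p\<close>: start right after the last visit of that level before \<open>p\<close>.\<close>

lemma first_drop_fibre_onto:
  assumes step: "\<And>q. F q \<le> F (q - 1) + 1" and m: "m \<in> {F p .. F (p - 1)}"
  shows "\<exists>i. first_drop F i = p \<and> F (i - 1) = m"
proof -
  define Q where "Q = {q. p - N \<le> q \<and> q < p \<and> F q \<le> m}"
  define q where "q = Max Q"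
  have fin: "finite Q" unfolding Q_def by (rule finite_subset[of _ "{p - N..<p}"]) auto
  moreover have "p - N \<in> Q" unfolding Q_def using N_pos m F_periodic[of "p - N"] by simp
  ultimately have q: "q \<in> Q" unfolding q_def by (intro Max_in) auto
  have above: "m < F r" if "q < r" "r < p" for r
  proof (rule ccontr)
    assume "\<not> m < F r"
    then have "r \<in> Q" using that q unfolding Q_def by simp
    then show False using Max_ge[OF fin] that unfolding q_def by fastforce
  qed
  have Fq: "F q = m"
  proof (cases "q + 1 < p")
    case True
    then have "m < F (q + 1)" using above by simp
    then show ?thesis using step[of "q + 1"] q unfolding Q_def by simp
  next
    case False
    then have "q = p - 1" using q unfolding Q_def by simp
    then show ?thesis using q m unfolding Q_def by simp
  qed
  have "first_drop F (q + 1) = p"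
  proof (rule first_drop_eqI)
    show "q + 1 \<le> p" using q unfolding Q_def by simp
    show "F p \<le> F (q + 1 - 1)" using Fq m by simp
    fix r assume "q + 1 \<le> r" "r < p"
    then show "F (q + 1 - 1) < F r" using above[of r] Fq by simp
  qed
  then show ?thesis using Fq by (intro exI[of _ "q + 1"]) simp
qed

lemma first_drop_fibre_card:
  assumes step: "\<And>q. F q \<le> F (q - 1) + 1"
  shows "card {i. first_drop F i = p} = nat (F (p - 1) - F p + 1)"
proof -
  have "inj_on (\<lambda>i. F (i - 1)) {i. first_drop F i = p}"
  proof (rule inj_onI)
    fix i i' assume "i \<in> {i. first_drop F i = p}" "i' \<in> {i. first_drop F i = p}"
      and "F (i - 1) = F (i' - 1)"
    then show "i = i'" using first_drop_fibre_mono[of i p i'] first_drop_fibre_mono[of i' p i]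
      by (cases i i' rule: linorder_cases) auto
  qed
  moreover have "(\<lambda>i. F (i - 1)) ` {i. first_drop F i = p} = {F p .. F (p - 1)}"
  proof (intro equalityI subsetI)
    fix m assume "m \<in> {F p .. F (p - 1)}"
    then show "m \<in> (\<lambda>i. F (i - 1)) ` {i. first_drop F i = p}"
      using first_drop_fibre_onto[OF step] by blast
  qed (use first_drop_fibre_range in blast)
  ultimately have "bij_betw (\<lambda>i. F (i - 1)) {i. first_drop F i = p} {F p .. F (p - 1)}"
    unfolding bij_betw_def by blast
  then show ?thesis by (simp add: bij_betw_same_card)
qed

end

lemma first_drop_depth:
  assumes nest: "nesting N h"
  shows "first_drop (depth h) i = h i"
proof (rule first_drop_eqI)
  note finite_crossing = finite_crossing[OF nest]
  show "i \<le> h i" by (rule nesting_le[OF nest])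
  have "{k. k \<le> h i \<and> h i < h k} \<subseteq> {k. k \<le> i - 1 \<and> i - 1 < h k}"
  proof
    fix k assume k: "k \<in> {k. k \<le> h i \<and> h i < h k}"
    have "k < i"
    proof (rule ccontr)
      assume "\<not> k < i"
      then have "k = i \<or> i < k" by linarith
      then show False using k nesting_nested[OF nest, of i k] by auto
    qed
    then show "k \<in> {k. k \<le> i - 1 \<and> i - 1 < h k}" using k nesting_le[OF nest, of i] by simp
  qed
  then show "depth h (h i) \<le> depth h (i - 1)"
    unfolding depth_def by (simp only: of_nat_le_iff card_mono[OF finite_crossing])
  fix q assume q: "i \<le> q" "q < h i"
  have "insert i {k. k \<le> i - 1 \<and> i - 1 < h k} \<subseteq> {k. k \<le> q \<and> q < h k}"
  proof
    fix k assume "k \<in> insert i {k. k \<le> i - 1 \<and> i - 1 < h k}"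
    then consider "k = i" | "k < i" "i \<le> h k" by auto
    then show "k \<in> {k. k \<le> q \<and> q < h k}"
      using q nesting_nested[OF nest, of k i] by cases auto
  qed
  then have "card (insert i {k. k \<le> i - 1 \<and> i - 1 < h k}) \<le> card {k. k \<le> q \<and> q < h k}"
    using card_mono[OF finite_crossing] by blast
  then show "depth h (i - 1) < depth h q"
    unfolding depth_def using finite_crossing[of "i - 1"] by simp
qed

text \<open>Hence a nesting function is determined by the number of arcs ending at each position:
  these numbers determine the depth up to an additive constant.\<close>

lemma nesting_eq_of_ends:
  assumes nest: "nesting N h" and nest': "nesting N h'"
    and ends: "\<And>p. card {i. h i = p} = card {i. h' i = p}"
  shows "h = h'"
proof -
  have "depth h' q - depth h q = depth h' 0 - depth h 0" for q
  proof (induction q rule: int_induct[where k=0])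
    case (step1 q)
    then show ?case using depth_step[OF nest, of "q + 1"] depth_step[OF nest', of "q + 1"] ends[of "q + 1"]
      by simp
  next
    case (step2 q)
    then show ?case using depth_step[OF nest, of q] depth_step[OF nest', of q] ends[of q] by simp
  qed simp
  then have "depth h' = (\<lambda>q. depth h q + (depth h' 0 - depth h 0))"
    by (auto simp: fun_eq_iff algebra_simps)
  then have "first_drop (depth h') = first_drop (depth h)"
    using first_drop_add_const by metis
  then show ?thesis using first_drop_depth[OF nest] first_drop_depth[OF nest'] by (auto simp: fun_eq_iff)
qed

lemma nesting_period_pos: "nesting N h \<Longrightarrow> N > 0"
  using nesting_le[of N h 0] nesting_lt[of N h 0] by simp

section \<open>Nesting functions and weak compositions\<close>

definition arc_counts :: "nat \<Rightarrow> (int \<Rightarrow> int) \<Rightarrow> nat list" where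
  "arc_counts n h = map (\<lambda>j. card {i. h i = int j}) [1..<n + 1]"

text \<open>Summing the arc counts telescopes the depth.\<close>

lemma arc_counts_sum:
  assumes "nesting N h"
  shows "int (sum_list (arc_counts m h)) = int m + depth h 0 - depth h (int m)"
proof (induction m)
  case (Suc m)
  have "int (sum_list (arc_counts (Suc m) h))
      = int (sum_list (arc_counts m h)) + int (card {i. h i = 1 + int m})"
    unfolding arc_counts_def by simp
  then show ?case using Suc depth_step[OF assms, of "1 + int m"] by simp
qed (simp add: arc_counts_def)

text \<open>By periodicity of the depth, the arc counts of period \<open>n\<close> form a weak composition of \<open>n\<close>.\<close>

lemma arc_counts_composition:
  assumes "nesting (int n) h"
  shows "arc_counts n h \<in> {l. length l = n \<and> sum_list l = n}"
proof -
  have "depth h (0 + int n) = depth h 0" by (rule depth_periodic[OF assms])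
  then have "int (sum_list (arc_counts n h)) = int n" using arc_counts_sum[OF assms, of n] by simp
  then show ?thesis unfolding arc_counts_def by simp
qed

text \<open>By periodicity, the arc counts determine the number of arcs ending anywhere, hence
  determine the nesting function.\<close>

lemma arc_counts_inj: "inj_on (arc_counts n) {h. nesting (int n) h}"
proof (rule inj_onI)
  fix h h' assume "h \<in> {h. nesting (int n) h}" "h' \<in> {h. nesting (int n) h}"
    and counts: "arc_counts n h = arc_counts n h'"
  then have nest: "nesting (int n) h" and nest': "nesting (int n) h'" by auto
  have window: "card {i. h i = r} = card {i. h' i = r}" if "r \<in> {1..int n}" for r
  proof -
    have "nat r \<in> set [1..<n + 1]" using that by auto
    then show ?thesis using counts that unfolding arc_counts_def map_eq_conv by force
  qed
  have "card {i. h i = p} = card {i. h' i = p}" for p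
  proof (rule periodic_window[where g="\<lambda>p. card {i. h i = p} = card {i. h' i = p}"])
    show "int n > 0" by (rule nesting_period_pos[OF nest])
    show "(card {i. h i = q + int n} = card {i. h' i = q + int n})
        = (card {i. h i = q} = card {i. h' i = q})" for q
      using ends_periodic[OF nest] ends_periodic[OF nest'] by simp
  qed (use window in blast)
  then show "h = h'" by (rule nesting_eq_of_ends[OF nest nest'])
qed

text \<open>The lattice path of a weak composition \<open>l\<close>: it rises by one at every step and drops by
  \<open>l ! r\<close> on entering position \<open>r + 1\<close> (indices taken modulo \<open>n\<close>).\<close>

definition composition_height :: "nat \<Rightarrow> nat list \<Rightarrow> int \<Rightarrow> int" where
  "composition_height n l q = q mod int n - int (sum_list (take (nat (q mod int n)) l))"

text \<open>The drop of the lattice path at \<open>q\<close> is the entry of \<open>l\<close> belonging to \<open>q\<close>, minus one;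
  across a period boundary this uses \<open>sum_list l = n\<close>.\<close>

lemma composition_height_step:
  assumes "n > 0" "length l = n" "sum_list l = n"
  shows "composition_height n l (q - 1) - composition_height n l q + 1 = int (l ! nat ((q - 1) mod int n))"
proof -
  define r where "r = (q - 1) mod int n"
  have r: "0 \<le> r" "r < int n" unfolding r_def using assms(1) by simp_all
  have q_mod: "q mod int n = (r + 1) mod int n" unfolding r_def by (simp add: mod_add_left_eq)
  have take_Suc: "sum_list (take (Suc k) l) = sum_list (take k l) + l ! k" if "k < length l" for k
    using that by (simp add: take_Suc_conv_app_nth)
  show ?thesis
  proof (cases "r + 1 < int n")
    case True
    then have "q mod int n = r + 1" using q_mod r by simp
    moreover have "nat (r + 1) = Suc (nat r)" "nat r < length l" using r assms by auto
    ultimately show ?thesis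
      unfolding composition_height_def r_def[symmetric] using take_Suc[of "nat r"] r by simp
  next
    case False
    then have last: "r + 1 = int n" using r by simp
    then have "q mod int n = 0" using q_mod by simp
    moreover have "nat r = n - 1" "Suc (n - 1) = n" using last assms(1) by auto
    moreover have "sum_list (take (Suc (n - 1)) l) = sum_list (take (n - 1) l) + l ! (n - 1)"
      using take_Suc[of "n - 1"] assms by simp
    ultimately show ?thesis
      unfolding composition_height_def r_def[symmetric] using assms(2,3) last by simp
  qed
qed

text \<open>Every weak composition is realised: the first returns of its lattice path form a nesting
  function with exactly \<open>l ! t\<close> arcs ending at position \<open>t + 1\<close>.\<close>

lemma arc_counts_onto:
  assumes "n > 0" and l: "length l = n" "sum_list l = n"
  shows "l \<in> arc_counts n ` {h. nesting (int n) h}"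
proof -
  define F where "F = composition_height n l"
  have N_pos: "int n > 0" using assms(1) by simp
  have F_periodic: "F (q + int n) = F q" for q unfolding F_def composition_height_def by simp
  have F_step: "F (q - 1) - F q + 1 = int (l ! nat ((q - 1) mod int n))" for q
    unfolding F_def by (rule composition_height_step[OF assms])
  have F_rises_by_one: "F q \<le> F (q - 1) + 1" for q using F_step[of q] by simp
  have "arc_counts n (first_drop F) = l"
  proof (rule nth_equalityI)
    show "length (arc_counts n (first_drop F)) = length l"
      using l by (simp add: arc_counts_def del: upt_Suc)
    fix t assume "t < length (arc_counts n (first_drop F))"
    then have t: "t < n" by (simp add: arc_counts_def del: upt_Suc)
    then have "arc_counts n (first_drop F) ! t = card {i. first_drop F i = int t + 1}"
      by (simp add: arc_counts_def add.commute del: upt_Suc)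
    also have "\<dots> = nat (F (int t + 1 - 1) - F (int t + 1) + 1)"
      by (rule first_drop_fibre_card[where F=F and N="int n", OF N_pos F_periodic F_rises_by_one])
    also have "\<dots> = l ! t" using F_step[of "int t + 1"] t by simp
    finally show "arc_counts n (first_drop F) ! t = l ! t" .
  qed
  moreover have "nesting (int n) (first_drop F)"
    by (rule nesting_first_drop[where F=F and N="int n", OF N_pos F_periodic])
  ultimately show ?thesis by blast
qed

lemma nesting_bij_compositions:
  assumes "n > 0"
  shows "bij_betw (arc_counts n) {h. nesting (int n) h} {l. length l = n \<and> sum_list l = n}"
  unfolding bij_betw_def using arc_counts_inj arc_counts_composition arc_counts_onto[OF assms] by blast

section \<open>From nesting functions to 231-avoiding permutations\<close>

text \<open>Placing the value
  \<open>h i - card (enclosing h i)\<close> at \<open>i\<close> yields a permutation in which \<open>j > i\<close> carries a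
  smaller value than \<open>i\<close> exactly when \<open>j\<close> lies under the arc of \<open>i\<close>.\<close>

definition enclosing :: "(int \<Rightarrow> int) \<Rightarrow> int \<Rightarrow> int set" where
  "enclosing h i = {k. k < i \<and> i \<le> h k}"

definition nesting_perm :: "(int \<Rightarrow> int) \<Rightarrow> int \<Rightarrow> int" where
  "nesting_perm h i = h i - int (card (enclosing h i))"

context
  fixes h :: "int \<Rightarrow> int" and N :: int
  assumes nest: "nesting N h"
begin

lemma finite_enclosing: "finite (enclosing h i)"
proof (rule finite_subset)
  show "enclosing h i \<subseteq> {i - N<..<i}"
  proof
    fix k assume "k \<in> enclosing h i"
    then show "k \<in> {i - N<..<i}" using nesting_lt[OF nest, of k] unfolding enclosing_def by simp
  qed
qed simp

lemma nesting_perm_inside: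
  assumes "i < j" "j \<le> h i"
  shows "nesting_perm h j < nesting_perm h i"
proof -
  have "insert i (enclosing h i) \<subseteq> enclosing h j"
  proof
    fix k assume "k \<in> insert i (enclosing h i)"
    then consider "k = i" | "k < i" "i \<le> h k" unfolding enclosing_def by auto
    then show "k \<in> enclosing h j"
      using assms nesting_nested[OF nest, of k i] unfolding enclosing_def by cases auto
  qed
  then have "card (insert i (enclosing h i)) \<le> card (enclosing h j)"
    using card_mono finite_enclosing by blast
  moreover have "i \<notin> enclosing h i" unfolding enclosing_def by simp
  ultimately have "card (enclosing h i) + 1 \<le> card (enclosing h j)" using finite_enclosing by simp
  then show ?thesis unfolding nesting_perm_def using nesting_nested[OF nest] assms by fastforce
qed

lemma nesting_perm_outside:
  assumes "i < j" "h i < j"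
  shows "nesting_perm h i < nesting_perm h j"
proof -
  have "enclosing h j \<subseteq> enclosing h i \<union> {h i<..<j}"
  proof
    fix k assume k: "k \<in> enclosing h j"
    consider "h i < k" | "k < i" | "k = i" | "i < k" "k \<le> h i" by linarith
    then show "k \<in> enclosing h i \<union> {h i<..<j}"
    proof cases
      case 4
      then have "h k \<le> h i" using nesting_nested[OF nest, of i k] by simp
      then show ?thesis using k assms unfolding enclosing_def by simp
    qed (use k assms in \<open>auto simp: enclosing_def\<close>)
  qed
  then have "card (enclosing h j) \<le> card (enclosing h i \<union> {h i<..<j})"
    by (intro card_mono) (auto simp: finite_enclosing)
  also have "\<dots> \<le> card (enclosing h i) + card {h i<..<j}" by (rule card_Un_le)
  finally have "int (card (enclosing h j)) \<le> int (card (enclosing h i)) + (j - h i - 1)"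
    using assms by simp
  then show ?thesis unfolding nesting_perm_def using nesting_le[OF nest, of j] by simp
qed

lemma nesting_perm_order: "i < j \<Longrightarrow> nesting_perm h j < nesting_perm h i \<longleftrightarrow> j \<le> h i"
  using nesting_perm_inside[of i j] nesting_perm_outside[of i j] by fastforce

lemma nesting_perm_inj: "inj (nesting_perm h)"
proof (rule injI)
  fix i j assume "nesting_perm h i = nesting_perm h j"
  then show "i = j"
    using nesting_perm_order[of i j] nesting_perm_order[of j i] nesting_perm_outside[of i j]
      nesting_perm_outside[of j i]
    by (cases i j rule: linorder_cases) (auto simp: not_le)
qed

lemma nesting_perm_periodic: "nesting_perm h (i + N) = nesting_perm h i + N"
proof -
  have "card (enclosing h (i + N)) = card (enclosing h i)"
    by (rule card_translate[where c=N]) (auto simp: enclosing_def nesting_periodic[OF nest])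
  then show ?thesis unfolding nesting_perm_def using nesting_periodic[OF nest, of i] by simp
qed

end

lemma interval_of_downward_closed:
  fixes S :: "int set"
  assumes "finite S" and above: "\<And>k. k \<in> S \<Longrightarrow> i < k"
    and closed: "\<And>k j. k \<in> S \<Longrightarrow> i < j \<Longrightarrow> j < k \<Longrightarrow> j \<in> S"
  shows "S = {i<..i + int (card S)}"
proof (cases "S = {}")
  case False
  define m where "m = Max S"
  have m: "m \<in> S" unfolding m_def using assms(1) False by simp
  have "S = {i<..m}"
  proof (intro equalityI subsetI)
    fix k assume "k \<in> S"
    then show "k \<in> {i<..m}" using above[of k] assms(1) unfolding m_def by simp
  next
    fix j assume "j \<in> {i<..m}"
    then show "j \<in> S" using closed[OF m, of j] m by (cases "j = m") auto
  qed
  moreover have "i < m" using above m by simp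
  ultimately show ?thesis by simp
qed simp

text \<open>For a 231-avoider these smaller values occupy an interval of positions, so the
  arc ends exactly at the last of them.\<close>

definition smaller_right :: "(int \<Rightarrow> int) \<Rightarrow> int \<Rightarrow> int set" where
  "smaller_right w i = {k. i < k \<and> w k < w i}"

definition arc :: "(int \<Rightarrow> int) \<Rightarrow> int \<Rightarrow> int" where
  "arc w i = i + int (card (smaller_right w i))"

context
  fixes w :: "int \<Rightarrow> int" and N :: int
  assumes N_pos: "N > 0" and w_periodic: "\<And>i. w (i + N) = w i + N" and w_inj: "inj w"
    and avoids_231: "\<And>i j k. i < j \<Longrightarrow> j < k \<Longrightarrow> \<not> (w k < w i \<and> w i < w j)"
begin

text \<open>Values of \<open>w\<close> stay within bounded distance of the diagonal, so \<open>smaller_right w i\<close>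
  is finite.\<close>

lemma finite_smaller_right: "finite (smaller_right w i)"
proof -
  obtain M where M: "\<And>x. x - w x \<le> M"
  proof
    fix x
    have "(x + N) - w (x + N) = x - w x" for x using w_periodic[of x] by simp
    then obtain r where "r \<in> {1..N}" "x - w x = r - w r"
      using periodic_window[OF N_pos, of "\<lambda>x. x - w x"] by blast
    then show "x - w x \<le> Max ((\<lambda>r. r - w r) ` {1..N})" by (simp add: Max_ge)
  qed
  have "smaller_right w i \<subseteq> {i<..w i + M}"
  proof
    fix k assume "k \<in> smaller_right w i"
    then show "k \<in> {i<..w i + M}" using M[of k] unfolding smaller_right_def by simp
  qed
  then show ?thesis by (rule finite_subset) simp
qed

lemma smaller_right_interval: "smaller_right w i = {i<..arc w i}"
  unfolding arc_def
proof (rule interval_of_downward_closed[OF finite_smaller_right])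
  fix k j assume k: "k \<in> smaller_right w i" and j: "i < j" "j < k"
  have "w i \<noteq> w j" using w_inj j by (auto simp: inj_eq)
  then show "j \<in> smaller_right w i" using avoids_231[of i j k] j k unfolding smaller_right_def by auto
qed (simp add: smaller_right_def)

lemma arc_order: "i < j \<Longrightarrow> w j < w i \<longleftrightarrow> j \<le> arc w i"
  using smaller_right_interval[of i] unfolding smaller_right_def by (auto simp: set_eq_iff)

lemma nesting_arc: "nesting N (arc w)"
proof -
  have lt: "arc w i < i + N" for i
    using arc_order[of i "i + N"] N_pos w_periodic[of i] by fastforce
  have "card (smaller_right w (i + N)) = card (smaller_right w i)" for i
    by (rule card_translate[where c=N]) (simp add: smaller_right_def w_periodic)
  then have periodic: "arc w (i + N) = arc w i + N" for i unfolding arc_def by simp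
  have nested: "arc w j \<le> arc w i" if "i < j" "j \<le> arc w i" for i j
  proof (rule ccontr)
    assume far: "\<not> arc w j \<le> arc w i"
    have "w (arc w j) < w j" using arc_order[of j "arc w j"] far that by simp
    also have "w j < w i" using arc_order[of i j] that by simp
    finally show False using arc_order[of i "arc w j"] far that by simp
  qed
  have le: "i \<le> arc w i" for i unfolding arc_def by simp
  show ?thesis unfolding nesting_def using le lt periodic nested by blast
qed

end

section \<open>Counting 231-avoiders\<close>

lemma avoiders_231_iff: "w \<in> avoiders n [2,3,1] \<longleftrightarrow> affine_perm n w \<and>
    (\<forall>i j k. i < j \<longrightarrow> j < k \<longrightarrow> \<not> (w k < w i \<and> w i < w j))"
  unfolding avoiders_iff contains_231 by blast

context
  fixes n :: nat
  assumes n_pos: "n > 0"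
begin

lemma avoider_231_arc:
  assumes "w \<in> avoiders n [2,3,1]"
  shows "nesting (int n) (arc w)" and "i < j \<Longrightarrow> w j < w i \<longleftrightarrow> j \<le> arc w i"
proof -
  have props: "int n > 0" "\<And>i. w (i + int n) = w i + int n" "inj w"
    "\<And>i j k. i < j \<Longrightarrow> j < k \<Longrightarrow> \<not> (w k < w i \<and> w i < w j)"
    using assms n_pos unfolding avoiders_231_iff affine_perm_def by (auto simp: bij_is_inj)
  show "nesting (int n) (arc w)" by (rule nesting_arc[OF props])
  show "i < j \<Longrightarrow> w j < w i \<longleftrightarrow> j \<le> arc w i" by (rule arc_order[OF props])
qed

text \<open>A 231-avoider is determined by its arcs, since they encode its relative order.\<close>

lemma arc_inj_on_avoiders: "inj_on arc (avoiders n [2,3,1])"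
proof (rule inj_onI)
  fix w w' assume w: "w \<in> avoiders n [2,3,1]" and w': "w' \<in> avoiders n [2,3,1]"
    and same_arcs: "arc w = arc w'"
  have inj: "inj w" "inj w'" using w w' unfolding avoiders_231_iff affine_perm_def by (auto simp: bij_is_inj)
  show "w = w'"
  proof (rule affine_eq_of_order[OF n_pos])
    show "affine_perm n w" "affine_perm n w'" using w w' unfolding avoiders_231_iff by blast+
    show "w i < w j \<longleftrightarrow> w' i < w' j" for i j
    proof (cases i j rule: linorder_cases)
      case less
      then have "w i \<noteq> w j" "w' i \<noteq> w' j" using inj by (auto simp: inj_eq)
      then show ?thesis using avoider_231_arc(2)[OF w less] avoider_231_arc(2)[OF w' less] same_arcs
        by auto
    next
      case greater
      then show ?thesis using avoider_231_arc(2)[OF w greater] avoider_231_arc(2)[OF w' greater] same_arcs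
        by auto
    qed simp
  qed
qed

lemma arc_onto_nesting:
  assumes nest: "nesting (int n) h"
  shows "h \<in> arc ` avoiders n [2,3,1]"
proof -
  obtain s where affine: "affine_perm n (\<lambda>i. nesting_perm h i - s)"
    using affine_normalise[OF n_pos nesting_perm_periodic[OF nest] nesting_perm_inj[OF nest]] .
  define w where "w = (\<lambda>i. nesting_perm h i - s)"
  have order: "i < j \<Longrightarrow> w j < w i \<longleftrightarrow> j \<le> h i" for i j
    unfolding w_def using nesting_perm_order[OF nest, of i j] by simp
  have "\<not> (w k < w i \<and> w i < w j)" if "i < j" "j < k" for i j k
    using order[of i k] order[of i j] that by auto
  then have avoider: "w \<in> avoiders n [2,3,1]" using affine unfolding avoiders_231_iff w_def by blast
  have "arc w i = h i" for i
  proof -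
    have "smaller_right w i = {i<..h i}" unfolding smaller_right_def using order[of i] by auto
    then show ?thesis unfolding arc_def using nesting_le[OF nest, of i] by simp
  qed
  then have "arc w = h" by (simp add: fun_eq_iff)
  then show ?thesis using avoider by blast
qed

text \<open>Composing both bijections, 231-avoiders correspond to weak compositions of \<open>n\<close> into
  \<open>n\<close> parts.\<close>

lemma card_avoiders_231: "card (avoiders n [2,3,1]) = (2 * n - 1) choose n"
proof -
  have "bij_betw arc (avoiders n [2,3,1]) {h. nesting (int n) h}"
    unfolding bij_betw_def using arc_inj_on_avoiders avoider_231_arc(1) arc_onto_nesting by blast
  then have "bij_betw (arc_counts n \<circ> arc) (avoiders n [2,3,1]) {l. length l = n \<and> sum_list l = n}"
    using nesting_bij_compositions[OF n_pos] by (rule bij_betw_trans)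
  then have "card (avoiders n [2,3,1]) = card {l :: nat list. length l = n \<and> sum_list l = n}"
    by (rule bij_betw_same_card)
  also have "\<dots> = (2 * n - 1) choose n" by (simp add: card_length_sum_list mult_2)
  finally show ?thesis .
qed

end

section \<open>Reverse-complement and the pattern 312\<close>

text \<open>Reverse-complement: the symmetry of the affine symmetric group that rotates the
  diagram of \<open>w\<close> by a half turn.\<close>

definition reverse_complement :: "nat \<Rightarrow> (int \<Rightarrow> int) \<Rightarrow> int \<Rightarrow> int" where
  "reverse_complement n w i = (int n + 1) - w (int n + 1 - i)"

lemma reverse_complement_involution: "reverse_complement n (reverse_complement n w) = w"
  unfolding reverse_complement_def by (simp add: fun_eq_iff)

lemma reverse_complement_affine:
  assumes "affine_perm n w"
  shows "affine_perm n (reverse_complement n w)"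
proof -
  have w: "bij w" "\<And>i. w (i + int n) = w i + int n" "(\<Sum>i\<in>{1..int n}. w i) = (\<Sum>i\<in>{1..int n}. i)"
    using assms unfolding affine_perm_iff by blast+
  have reflection: "bij (\<lambda>i::int. int n + 1 - i)"
    by (rule o_bij[of "\<lambda>i. int n + 1 - i"]) (auto simp: fun_eq_iff)
  have "reverse_complement n w = (\<lambda>v. int n + 1 - v) \<circ> w \<circ> (\<lambda>i. int n + 1 - i)"
    unfolding reverse_complement_def by (simp add: fun_eq_iff)
  then have "bij (reverse_complement n w)" using reflection w(1) by (simp add: bij_comp)
  moreover have "reverse_complement n w (i + int n) = reverse_complement n w i + int n" for i
  proof -
    have "w (int n + 1 - i) = w ((int n + 1 - (i + int n)) + int n)" by (rule arg_cong[where f=w]) simp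
    then show ?thesis using w(2)[of "int n + 1 - (i + int n)"] unfolding reverse_complement_def by simp
  qed
  moreover have "(\<Sum>i\<in>{1..int n}. reverse_complement n w i) = (\<Sum>i\<in>{1..int n}. i)"
  proof -
    have "bij_betw (\<lambda>i. int n + 1 - i) {1..int n} {1..int n}"
      by (rule bij_betw_byWitness[where f'="\<lambda>i. int n + 1 - i"]) auto
    then have "(\<Sum>i\<in>{1..int n}. w (int n + 1 - i)) = (\<Sum>i\<in>{1..int n}. w i)"
      using sum.reindex_bij_betw[of _ _ _ w] by blast
    then have "(\<Sum>i\<in>{1..int n}. reverse_complement n w i) = int n * (int n + 1) - (\<Sum>i\<in>{1..int n}. i)"
      unfolding reverse_complement_def using w(3) by (simp add: sum_subtractf)
    then show ?thesis using gauss_int[of n] by simp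
  qed
  ultimately show ?thesis unfolding affine_perm_iff by blast
qed

lemma reverse_complement_231:
  "contains_pattern (reverse_complement n w) [2,3,1] \<longleftrightarrow> contains_pattern w [3,1,2]"
proof
  assume "contains_pattern (reverse_complement n w) [2,3,1]"
  then obtain i j k where "i < j" "j < k"
    "w (int n + 1 - i) < w (int n + 1 - k)" "w (int n + 1 - j) < w (int n + 1 - i)"
    unfolding contains_231 reverse_complement_def by auto
  then show "contains_pattern w [3,1,2]" unfolding contains_312
    by (intro exI[of _ "int n + 1 - k"] exI[of _ "int n + 1 - j"] exI[of _ "int n + 1 - i"]) simp
next
  assume "contains_pattern w [3,1,2]"
  then obtain i j k where "i < j" "j < k" "w j < w k" "w k < w i"
    unfolding contains_312 by auto
  then show "contains_pattern (reverse_complement n w) [2,3,1]" unfolding contains_231 reverse_complement_def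
    by (intro exI[of _ "int n + 1 - k"] exI[of _ "int n + 1 - j"] exI[of _ "int n + 1 - i"]) simp
qed

lemma card_avoiders_312: "card (avoiders n [3,1,2]) = card (avoiders n [2,3,1])"
proof -
  have "bij_betw (reverse_complement n) (avoiders n [2,3,1]) (avoiders n [3,1,2])"
  proof (rule bij_betw_byWitness[where f'="reverse_complement n"])
    show "reverse_complement n ` avoiders n [2,3,1] \<subseteq> avoiders n [3,1,2]"
      using reverse_complement_affine reverse_complement_231[of n "reverse_complement n _"]
      by (auto simp: avoiders_iff reverse_complement_involution)
    show "reverse_complement n ` avoiders n [3,1,2] \<subseteq> avoiders n [2,3,1]"
      using reverse_complement_affine reverse_complement_231 by (auto simp: avoiders_iff)
  qed (simp_all add: reverse_complement_involution)
  then show ?thesis by (simp add: bij_betw_same_card)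
qed

theorem theorem4p1:
  fixes n :: nat
  assumes "n \<ge> 2"
  shows "avoiders n [1,2,3] = {}
    \<and> avoiders n [1,3,2] = {id}
    \<and> avoiders n [2,1,3] = {id}
    \<and> card (avoiders n [2,3,1]) = card (avoiders n [3,1,2])
    \<and> card (avoiders n [2,3,1]) = (2 * n - 1) choose n
    \<and> card (avoiders n [3,1,2]) = (2 * n - 1) choose n"
proof -
  have "n > 0" using assms by simp
  then show ?thesis
    using avoiders_123_empty avoiders_132 avoiders_213 card_avoiders_231 card_avoiders_312 by simp
qed

end
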